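(* Let $K$ be a field of characteristic $0$ and let $K[x,y]$ be the polynomial algebra in two variables over $K$. Consider the following bijections of the set $K[x,y]\times K[x,y]$ of pairs of polynomials: (E1) for $a\in K^{\ast}$ and an integer $k\ge 2$, the map $(u,v)\mapsto (u+a\,v^k,\ v)$; (E2) for $a\in K^{\ast}$ and an integer $k\ge 2$, the map $(u,v)\mapsto (u,\ v+a\,u^k)$. Let $A$ be the group (under composition) generated by all transformations of type (E1), let $B$ be the group generated by all transformations of type (E2), and let $G$ be the group generated by all transformations of types (E1) and (E2) together. Then $G$ is the free product of its subgroups $A$ and $B$, i.e. the homomorphism $A\ast B\to G$ induced by the inclusions $A\hookrightarrow G$ and $B\hookrightarrow G$ is an isomorphism. (The subgroups $A$ and $B$ are abelian.)
   Context: Via the action on the pair $(x,y)$, transformations of pairs of polynomials correspond to (tuples of images under) automorphisms of $K[x,y]$; the groups $A$, $B$, $G$ are groups of permutations of $K[x,y]\times K[x,y]$ under composition. *)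

theory Defs
  imports "HOL-Computational_Algebra.Polynomial" "HOL-Algebra.Bij" "HOL-Algebra.Generated_Groups"
begin

text \<open>K[x,y] is represented as (K[x])[y], i.e. the type 'a poly poly.
  A pair of polynomials is an element of 'a poly poly \<times> 'a poly poly.\<close>

type_synonym 'a ppair = "'a poly poly \<times> 'a poly poly"

definition cst2 :: "'a::field \<Rightarrow> 'a poly poly" where
  "cst2 a = [:[:a:]:]"

definition E1 :: "'a::field \<Rightarrow> nat \<Rightarrow> 'a ppair \<Rightarrow> 'a ppair" where
  "E1 a k = (\<lambda>(u, v). (u + cst2 a * v ^ k, v))"

definition E2 :: "'a::field \<Rightarrow> nat \<Rightarrow> 'a ppair \<Rightarrow> 'a ppair" where
  "E2 a k = (\<lambda>(u, v). (u, v + cst2 a * u ^ k))"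

definition E1_maps :: "('a::field ppair \<Rightarrow> 'a ppair) set" where
  "E1_maps = {E1 a k | a k. a \<noteq> 0 \<and> k \<ge> 2}"

definition E2_maps :: "('a::field ppair \<Rightarrow> 'a ppair) set" where
  "E2_maps = {E2 a k | a k. a \<noteq> 0 \<and> k \<ge> 2}"

abbreviation PermG :: "('a::field ppair \<Rightarrow> 'a ppair) monoid" where
  "PermG \<equiv> BijGroup UNIV"

definition groupA :: "('a::field ppair \<Rightarrow> 'a ppair) set" where
  "groupA = generate PermG E1_maps"

definition groupB :: "('a::field ppair \<Rightarrow> 'a ppair) set" where
  "groupB = generate PermG E2_maps"

definition groupG :: "('a::field ppair \<Rightarrow> 'a ppair) set" where
  "groupG = generate PermG (E1_maps \<union> E2_maps)"

text \<open>A list of elements alternating between A-{1} and B-{1} (starting in either).\<close>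
definition alternating_word :: "('a, 'b) monoid_scheme \<Rightarrow> 'a set \<Rightarrow> 'a set \<Rightarrow> 'a list \<Rightarrow> bool" where
  "alternating_word G A B ws \<longleftrightarrow>
     (\<exists>s::nat. \<forall>i < length ws. ws ! i \<in> (if even (i + s) then A else B) - {\<one>\<^bsub>G\<^esub>})"

text \<open>Internal free product: G is generated by its subgroups A and B, and every nonempty
  alternating product of nontrivial elements of A and B is nontrivial (normal form theorem);
  this is exactly the statement that the canonical map A * B \<rightarrow> G is an isomorphism.\<close>
definition is_free_product :: "('a, 'b) monoid_scheme \<Rightarrow> 'a set \<Rightarrow> 'a set \<Rightarrow> bool" where
  "is_free_product G A B \<longleftrightarrow>
     group G \<and> subgroup A G \<and> subgroup B G \<and> generate G (A \<union> B) = carrier G \<and>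
     (\<forall>ws. ws \<noteq> [] \<and> alternating_word G A B ws \<longrightarrow>
        foldr (\<lambda>x y. x \<otimes>\<^bsub>G\<^esub> y) ws \<one>\<^bsub>G\<^esub> \<noteq> \<one>\<^bsub>G\<^esub>)"

end

theory Submission
  imports Defs
begin

text \<open>Every element of \<open>A\<close> is a shear \<open>(u, v) \<mapsto> (u + P(v), v)\<close> for a polynomial
  \<open>P\<close> without terms of degree below 2, and dually for \<open>B\<close>; since shears compose by adding
  their polynomials, \<open>A\<close> and \<open>B\<close> are abelian. Freeness is a ping-pong argument on degrees
  in \<open>y\<close>, the outer variable of \<open>(K[x])[y]\<close>: a nontrivial element of \<open>A\<close> sends a pair
  with \<open>1 \<le> deg u \<le> deg v\<close> to one with \<open>deg u = deg P \<cdot> deg v > deg v\<close>, a nontrivial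
  element of \<open>B\<close> does the opposite, so a nonempty alternating word moves \<open>(y, y)\<close>.
  Characteristic 0 is never used.\<close>

definition psubst :: "'a::comm_semiring_1 poly \<Rightarrow> 'a poly poly \<Rightarrow> 'a poly poly" where
  "psubst P v = pcompose (map_poly (\<lambda>c. [:c:]) P) v"

lemma psubst_add: "psubst (P + Q) v = psubst P v + psubst Q v"
proof -
  have "map_poly (\<lambda>c. [:c:]) (P + Q) = map_poly (\<lambda>c. [:c:]) P + map_poly (\<lambda>c. [:c:]) Q"
    by (rule poly_eqI) (simp add: coeff_map_poly)
  then show ?thesis
    by (simp add: psubst_def pcompose_add)
qed

lemma psubst_0 [simp]: "psubst 0 v = 0"
  by (simp add: psubst_def)

lemma pcompose_power: "pcompose (p ^ n) q = pcompose p q ^ n"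
  for p q :: "'a::comm_semiring_1 poly"
  by (induction n) (simp_all add: pcompose_mult pcompose_1)

lemma psubst_monom: "psubst (monom a k) v = [:[:a:]:] * v ^ k"
proof -
  have "map_poly (\<lambda>c. [:c:]) (monom a k) = monom [:a:] k"
    by (simp add: map_poly_monom)
  then show ?thesis
    by (simp add: psubst_def monom_altdef pcompose_smult pcompose_power pcompose_pCons)
qed

lemma degree_psubst: "degree (psubst P v) = degree P * degree v"
  for P :: "'a::idom poly"
  by (simp add: psubst_def degree_pcompose degree_map_poly)

lemma degree_ge_if_low_coeffs_zero:
  assumes "\<forall>i<n. coeff P i = 0" and "P \<noteq> 0"
  shows "n \<le> degree P"
  using assms leading_coeff_0_iff not_le by metis

lemma degree_add_psubst_gt:
  fixes P :: "'a::idom poly"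
  assumes "2 \<le> degree P" and "1 \<le> degree v" and "degree u \<le> degree v"
  shows "degree v < degree (u + psubst P v)"
proof -
  have "2 * degree v \<le> degree P * degree v"
    using assms(1) by (rule mult_le_mono1)
  then have "degree v < degree P * degree v"
    using assms(2) by linarith
  moreover have "degree u < degree (psubst P v)"
    using assms(3) calculation unfolding degree_psubst by linarith
  ultimately show ?thesis
    by (simp add: degree_add_eq_right degree_psubst)
qed

definition shear1 :: "'a::comm_ring_1 poly \<Rightarrow> 'a ppair \<Rightarrow> 'a ppair" where
  "shear1 P = (\<lambda>(u, v). (u + psubst P v, v))"

definition shear2 :: "'a::comm_ring_1 poly \<Rightarrow> 'a ppair \<Rightarrow> 'a ppair" where
  "shear2 P = (\<lambda>(u, v). (u, v + psubst P u))"

lemma shear1_add: "shear1 P \<circ> shear1 Q = shear1 (P + Q)"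
  by (auto simp: shear1_def psubst_add algebra_simps)

lemma shear2_add: "shear2 P \<circ> shear2 Q = shear2 (P + Q)"
  by (auto simp: shear2_def psubst_add algebra_simps)

lemma shear1_0 [simp]: "shear1 0 = id"
  by (auto simp: shear1_def)

lemma shear2_0 [simp]: "shear2 0 = id"
  by (auto simp: shear2_def)

lemma bij_shear1: "bij (shear1 P)"
  by (rule o_bij[of "shear1 (-P)"]) (simp_all add: shear1_add)

lemma bij_shear2: "bij (shear2 P)"
  by (rule o_bij[of "shear2 (-P)"]) (simp_all add: shear2_add)

lemma E1_eq_shear1: "E1 a k = shear1 (monom a k)"
  by (auto simp: E1_def shear1_def psubst_monom cst2_def)

lemma E2_eq_shear2: "E2 a k = shear2 (monom a k)"
  by (auto simp: E2_def shear2_def psubst_monom cst2_def)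

lemma one_BijGroup_UNIV: "\<one>\<^bsub>BijGroup UNIV\<^esub> = id"
  by (auto simp: BijGroup_def)

lemma carrier_BijGroup_UNIV: "carrier (BijGroup UNIV) = {f. bij f}"
  by (auto simp: BijGroup_def Bij_def)

lemma mult_BijGroup_UNIV: "bij f \<Longrightarrow> bij g \<Longrightarrow> f \<otimes>\<^bsub>BijGroup UNIV\<^esub> g = f \<circ> g"
  by (auto simp: BijGroup_def Bij_def compose_def)

lemma foldr_comp_Cons_apply: "foldr (\<circ>) (f # fs) id x = f (foldr (\<circ>) fs id x)"
  by simp

lemma bij_foldr_comp: "\<forall>f\<in>set fs. bij f \<Longrightarrow> bij (foldr (\<circ>) fs id)"
  by (induction fs) (auto intro: bij_comp)

lemma foldr_mult_BijGroup_UNIV: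
  "\<forall>f\<in>set fs. bij f \<Longrightarrow> foldr (\<lambda>f g. f \<otimes>\<^bsub>BijGroup UNIV\<^esub> g) fs \<one>\<^bsub>BijGroup UNIV\<^esub> = foldr (\<circ>) fs id"
proof (induction fs)
  case (Cons f fs)
  then have "bij f" and bijs: "\<forall>g\<in>set fs. bij g"
    by simp_all
  have "foldr (\<lambda>f g. f \<otimes>\<^bsub>BijGroup UNIV\<^esub> g) (f # fs) \<one>\<^bsub>BijGroup UNIV\<^esub>
      = f \<otimes>\<^bsub>BijGroup UNIV\<^esub> foldr (\<lambda>f g. f \<otimes>\<^bsub>BijGroup UNIV\<^esub> g) fs \<one>\<^bsub>BijGroup UNIV\<^esub>"
    by simp
  also have "\<dots> = f \<otimes>\<^bsub>BijGroup UNIV\<^esub> foldr (\<circ>) fs id"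
    by (simp only: Cons.IH[OF bijs])
  also have "\<dots> = f \<circ> foldr (\<circ>) fs id"
    using \<open>bij f\<close> bij_foldr_comp[OF bijs] by (rule mult_BijGroup_UNIV)
  also have "\<dots> = foldr (\<circ>) (f # fs) id"
    by simp
  finally show ?case .
qed (simp add: one_BijGroup_UNIV)

lemma (in group) generate_subset_hom_image:
  fixes f :: "'c::ab_group_add \<Rightarrow> 'a"
  assumes f_carrier: "\<And>P. f P \<in> carrier G"
    and f_add: "\<And>P Q. f P \<otimes> f Q = f (P + Q)"
    and T: "0 \<in> T" "\<And>P. P \<in> T \<Longrightarrow> -P \<in> T" "\<And>P Q. P \<in> T \<Longrightarrow> Q \<in> T \<Longrightarrow> P + Q \<in> T"
    and S: "S \<subseteq> f ` T"
  shows "generate G S \<subseteq> f ` T"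
proof
  have f_0: "f 0 = \<one>"
    using f_add[of 0 0] f_carrier by simp
  have f_uminus: "inv f P = f (-P)" for P
    by (rule inv_equality) (simp_all add: f_add f_0 f_carrier)
  fix h assume "h \<in> generate G S"
  then show "h \<in> f ` T"
  proof induction
    case one
    show ?case using f_0 T(1) by (metis image_eqI)
  next
    case (incl h)
    then show ?case using S by blast
  next
    case (inv h)
    then show ?case using S T(2) f_uminus by blast
  next
    case (eng h1 h2)
    then show ?case using T(3) f_add by blast
  qed
qed

lemma (in group) comm_group_if_subset_hom_image:
  fixes f :: "'c::ab_semigroup_add \<Rightarrow> 'a"
  assumes "subgroup H G" and "H \<subseteq> range f" and "\<And>P Q. f P \<otimes> f Q = f (P + Q)"
  shows "comm_group (G\<lparr>carrier := H\<rparr>)"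
proof (rule group.group_comm_groupI)
  show "group (G\<lparr>carrier := H\<rparr>)"
    using assms(1) by (rule subgroup_imp_group)
  fix x y assume "x \<in> carrier (G\<lparr>carrier := H\<rparr>)" "y \<in> carrier (G\<lparr>carrier := H\<rparr>)"
  then have "x \<in> range f" "y \<in> range f"
    using assms(2) by auto
  then obtain P Q where "x = f P" "y = f Q"
    by blast
  then show "x \<otimes>\<^bsub>G\<lparr>carrier := H\<rparr>\<^esub> y = y \<otimes>\<^bsub>G\<lparr>carrier := H\<rparr>\<^esub> x"
    by (simp add: assms(3) add.commute)
qed

lemma (in group) is_free_product_generate:
  assumes SA: "SA \<subseteq> carrier G" and SB: "SB \<subseteq> carrier G"
    and words: "\<And>ws. ws \<noteq> [] \<Longrightarrow> alternating_word G (generate G SA) (generate G SB) ws \<Longrightarrow>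
      foldr (\<lambda>x y. x \<otimes> y) ws \<one> \<noteq> \<one>"
  shows "is_free_product (G\<lparr>carrier := generate G (SA \<union> SB)\<rparr>) (generate G SA) (generate G SB)"
proof -
  let ?A = "generate G SA" and ?B = "generate G SB" and ?H = "generate G (SA \<union> SB)"
  have sub_H: "subgroup ?H G"
    using SA SB by (simp add: generate_is_subgroup)
  have A_H: "?A \<subseteq> ?H" and B_H: "?B \<subseteq> ?H"
    by (simp_all add: mono_generate)
  have "generate G (?A \<union> ?B) = ?H"
  proof
    show "generate G (?A \<union> ?B) \<subseteq> ?H"
      using A_H B_H sub_H by (simp add: generate_subgroup_incl)
    show "?H \<subseteq> generate G (?A \<union> ?B)"
      by (rule mono_generate) (auto intro: generate.incl)
  qed
  then have "generate (G\<lparr>carrier := ?H\<rparr>) (?A \<union> ?B) = ?H"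
    using A_H B_H sub_H by (simp add: generate_consistent)
  moreover have "subgroup ?A (G\<lparr>carrier := ?H\<rparr>)" "subgroup ?B (G\<lparr>carrier := ?H\<rparr>)"
    using A_H B_H sub_H SA SB by (simp_all add: subgroup_incl generate_is_subgroup)
  moreover have "group (G\<lparr>carrier := ?H\<rparr>)"
    using sub_H by (rule subgroup_imp_group)
  moreover have "alternating_word (G\<lparr>carrier := ?H\<rparr>) = alternating_word G"
    by (simp add: alternating_word_def fun_eq_iff)
  ultimately show ?thesis
    using words by (simp add: is_free_product_def)
qed

lemma ping_pong:
  assumes A: "\<And>a. a \<in> A - {id} \<Longrightarrow> a ` X \<subseteq> Y - X"
    and B: "\<And>b. b \<in> B - {id} \<Longrightarrow> b ` Y \<subseteq> X - Y"
    and x0: "x0 \<in> X \<inter> Y"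
    and ws: "\<forall>i<length ws. ws ! i \<in> (if even (i + s) then A else B) - {id}"
    and "ws \<noteq> []"
  shows "foldr (\<circ>) ws id x0 \<in> (if even s then Y - X else X - Y)"
  using ws \<open>ws \<noteq> []\<close>
proof (induction ws arbitrary: s)
  case (Cons w ws)
  have w: "w \<in> (if even s then A else B) - {id}"
    using Cons.prems(1) by force
  have "foldr (\<circ>) ws id x0 \<in> (if even s then X else Y)"
  proof (cases "ws = []")
    case False
    have "\<forall>i<length ws. ws ! i \<in> (if even (i + Suc s) then A else B) - {id}"
      using Cons.prems(1) by (metis Suc_less_eq add_Suc add_Suc_right length_Cons nth_Cons_Suc)
    then have "foldr (\<circ>) ws id x0 \<in> (if even (Suc s) then Y - X else X - Y)"
      by (rule Cons.IH[OF _ False])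
    then show ?thesis
      by auto
  qed (use x0 in simp)
  then have "w (foldr (\<circ>) ws id x0) \<in> (if even s then Y - X else X - Y)"
    using w A B by (cases "even s") (simp_all, blast+)
  then show ?case
    by (subst foldr_comp_Cons_apply)
qed simp

definition fst_dominant :: "'a::zero ppair set" where
  "fst_dominant = {(u, v). 1 \<le> degree u \<and> degree v \<le> degree u}"

definition snd_dominant :: "'a::zero ppair set" where
  "snd_dominant = {(u, v). 1 \<le> degree v \<and> degree u \<le> degree v}"

lemma shear1_image_snd_dominant:
  fixes P :: "'a::idom poly"
  assumes "2 \<le> degree P"
  shows "shear1 P ` snd_dominant \<subseteq> fst_dominant - snd_dominant"
  using degree_add_psubst_gt[OF assms]
  by (fastforce simp: shear1_def fst_dominant_def snd_dominant_def)

lemma shear2_image_fst_dominant: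
  fixes P :: "'a::idom poly"
  assumes "2 \<le> degree P"
  shows "shear2 P ` fst_dominant \<subseteq> snd_dominant - fst_dominant"
  using degree_add_psubst_gt[OF assms]
  by (fastforce simp: shear2_def fst_dominant_def snd_dominant_def)

lemma E1_maps_subset: "E1_maps \<subseteq> shear1 ` {P. \<forall>i<2. coeff P i = 0}"
  by (auto simp: E1_maps_def E1_eq_shear1 coeff_monom)

lemma E2_maps_subset: "E2_maps \<subseteq> shear2 ` {P. \<forall>i<2. coeff P i = 0}"
  by (auto simp: E2_maps_def E2_eq_shear2 coeff_monom)

lemma groupA_subset: "groupA \<subseteq> shear1 ` {P. \<forall>i<2. coeff P i = 0}"
  unfolding groupA_def
  by (rule group.generate_subset_hom_image[OF group_BijGroup _ _ _ _ _ E1_maps_subset])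
    (simp_all add: carrier_BijGroup_UNIV bij_shear1 mult_BijGroup_UNIV shear1_add)

lemma groupB_subset: "groupB \<subseteq> shear2 ` {P. \<forall>i<2. coeff P i = 0}"
  unfolding groupB_def
  by (rule group.generate_subset_hom_image[OF group_BijGroup _ _ _ _ _ E2_maps_subset])
    (simp_all add: carrier_BijGroup_UNIV bij_shear2 mult_BijGroup_UNIV shear2_add)

lemma groupA_image_snd_dominant:
  assumes "h \<in> groupA - {id}"
  shows "h ` snd_dominant \<subseteq> fst_dominant - snd_dominant"
proof -
  obtain P where h: "h = shear1 P" and P: "\<forall>i<2. coeff P i = 0"
    using assms groupA_subset by blast
  with assms have "P \<noteq> 0"
    by auto
  with P have "2 \<le> degree P"
    by (rule degree_ge_if_low_coeffs_zero)
  then show ?thesis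
    unfolding h by (rule shear1_image_snd_dominant)
qed

lemma groupB_image_fst_dominant:
  assumes "h \<in> groupB - {id}"
  shows "h ` fst_dominant \<subseteq> snd_dominant - fst_dominant"
proof -
  obtain P where h: "h = shear2 P" and P: "\<forall>i<2. coeff P i = 0"
    using assms groupB_subset by blast
  with assms have "P \<noteq> 0"
    by auto
  with P have "2 \<le> degree P"
    by (rule degree_ge_if_low_coeffs_zero)
  then show ?thesis
    unfolding h by (rule shear2_image_fst_dominant)
qed

lemma alternating_word_groupA_groupB_ne_one:
  assumes "ws \<noteq> []" and "alternating_word PermG groupA groupB ws"
  shows "foldr (\<lambda>f g. f \<otimes>\<^bsub>PermG\<^esub> g) ws \<one>\<^bsub>PermG\<^esub> \<noteq> \<one>\<^bsub>PermG\<^esub>"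
proof -
  obtain s where s: "\<forall>i<length ws. ws ! i \<in> (if even (i + s) then groupA else groupB) - {id}"
    using assms(2) by (auto simp: alternating_word_def one_BijGroup_UNIV)
  have "\<forall>f\<in>set ws. bij f"
    using s groupA_subset groupB_subset bij_shear1 bij_shear2
    by (fastforce simp: in_set_conv_nth split: if_splits)
  then have prod_eq: "foldr (\<lambda>f g. f \<otimes>\<^bsub>PermG\<^esub> g) ws \<one>\<^bsub>PermG\<^esub> = foldr (\<circ>) ws id"
    by (rule foldr_mult_BijGroup_UNIV)
  have base: "([:0, 1:], [:0, 1:]) \<in> snd_dominant \<inter> fst_dominant"
    by (simp add: fst_dominant_def snd_dominant_def)
  have "foldr (\<circ>) ws id ([:0, 1:], [:0, 1:]) \<notin> snd_dominant \<inter> fst_dominant"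
    using ping_pong[OF groupA_image_snd_dominant groupB_image_fst_dominant base s assms(1)]
    by (simp split: if_splits)
  with base have "foldr (\<circ>) ws id \<noteq> id"
    by (metis id_apply)
  with prod_eq show ?thesis
    by (simp add: one_BijGroup_UNIV)
qed

theorem lemma3p2:
  shows "is_free_product (PermG\<lparr>carrier := (groupG :: ('a::field_char_0 ppair \<Rightarrow> 'a ppair) set)\<rparr>)
           groupA groupB
         \<and> comm_group (PermG\<lparr>carrier := (groupA :: ('a::field_char_0 ppair \<Rightarrow> 'a ppair) set)\<rparr>)
         \<and> comm_group (PermG\<lparr>carrier := (groupB :: ('a::field_char_0 ppair \<Rightarrow> 'a ppair) set)\<rparr>)"
proof (intro conjI)
  interpret PermG: group "PermG :: ('a ppair \<Rightarrow> 'a ppair) monoid"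
    by (rule group_BijGroup)
  have E1_carrier: "E1_maps \<subseteq> carrier (PermG :: ('a ppair \<Rightarrow> 'a ppair) monoid)"
    and E2_carrier: "E2_maps \<subseteq> carrier (PermG :: ('a ppair \<Rightarrow> 'a ppair) monoid)"
    unfolding carrier_BijGroup_UNIV
    using E1_maps_subset E2_maps_subset bij_shear1 bij_shear2 by blast+
  show "is_free_product (PermG\<lparr>carrier := (groupG :: ('a ppair \<Rightarrow> 'a ppair) set)\<rparr>) groupA groupB"
    unfolding groupA_def groupB_def groupG_def
    by (rule PermG.is_free_product_generate[OF E1_carrier E2_carrier
          alternating_word_groupA_groupB_ne_one[unfolded groupA_def groupB_def]])
  show "comm_group (PermG\<lparr>carrier := (groupA :: ('a ppair \<Rightarrow> 'a ppair) set)\<rparr>)"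
    using groupA_subset PermG.generate_is_subgroup[OF E1_carrier]
    by (intro PermG.comm_group_if_subset_hom_image[of _ shear1])
      (auto simp: groupA_def mult_BijGroup_UNIV bij_shear1 shear1_add)
  show "comm_group (PermG\<lparr>carrier := (groupB :: ('a ppair \<Rightarrow> 'a ppair) set)\<rparr>)"
    using groupB_subset PermG.generate_is_subgroup[OF E2_carrier]
    by (intro PermG.comm_group_if_subset_hom_image[of _ shear2])
      (auto simp: groupB_def mult_BijGroup_UNIV bij_shear2 shear2_add)
qed

end
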